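(* Let $M$ be a strongly sofic monoid and let $K$ be a field. Then the monoid algebra $K[M]$ is stably finite.
   Context: A monoid $M$ is strongly sofic if for every finite subset $F \subset M$ there exists an integer $\Delta_F \geq 1$ such that for every $\varepsilon > 0$ there exist a non-empty finite set $D$ and a map $\sigma \colon M \to \operatorname{Map}(D)$ (where $\operatorname{Map}(D)$ is the monoid of all maps $D \to D$ under composition) satisfying: (1) $\sigma(1_M) = \mathrm{Id}_D$; (2) $d_D^{\mathrm{Ham}}(\sigma(k_1k_2),\sigma(k_1)\sigma(k_2)) \leq \varepsilon$ for all $k_1,k_2 \in F$; (3) $d_D^{\mathrm{Ham}}(\sigma(k_1),\sigma(k_2)) \geq 1-\varepsilon$ for all distinct $k_1,k_2 \in F$; (4) $|\sigma(k)^{-1}(v)| \leq \Delta_F$ for all $k \in F$, $v \in D$. Here $d_D^{\mathrm{Ham}}(f,g) = \frac{1}{|D|}|\{v \in D : f(v) \neq g(v)\}|$. A ring $R$ is stably finite if for every integer $d \geq 1$ the multiplicative monoid of $d \times d$ matrices over $R$ is directly finite, i.e., $XY = I$ implies $YX = I$. *)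

theory Defs
  imports Main "HOL.Real"
begin

text \<open>Finite sets D are taken as finite subsets of nat (every finite set is in bijection
with such a set). An element of Map(D) is represented by a function nat => nat mapping D
into D; only its values on D matter.\<close>

definition ham_dist :: "nat set \<Rightarrow> (nat \<Rightarrow> nat) \<Rightarrow> (nat \<Rightarrow> nat) \<Rightarrow> real" where
  "ham_dist D f g = real (card {v \<in> D. f v \<noteq> g v}) / real (card D)"

definition strongly_sofic :: "'m::monoid_mult itself \<Rightarrow> bool" where
  "strongly_sofic _ \<longleftrightarrow>
    (\<forall>F :: 'm set. finite F \<longrightarrow>
      (\<exists>\<Delta>::nat. \<Delta> \<ge> 1 \<and>
        (\<forall>\<epsilon>::real. \<epsilon> > 0 \<longrightarrow>
          (\<exists>(D :: nat set) (\<sigma> :: 'm \<Rightarrow> nat \<Rightarrow> nat).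
             finite D \<and> D \<noteq> {} \<and>
             (\<forall>k. \<sigma> k ` D \<subseteq> D) \<and>
             (\<forall>v\<in>D. \<sigma> 1 v = v) \<and>
             (\<forall>k1\<in>F. \<forall>k2\<in>F. ham_dist D (\<sigma> (k1 * k2)) (\<sigma> k1 \<circ> \<sigma> k2) \<le> \<epsilon>) \<and>
             (\<forall>k1\<in>F. \<forall>k2\<in>F. k1 \<noteq> k2 \<longrightarrow> ham_dist D (\<sigma> k1) (\<sigma> k2) \<ge> 1 - \<epsilon>) \<and>
             (\<forall>k\<in>F. \<forall>v\<in>D. card {u \<in> D. \<sigma> k u = v} \<le> \<Delta>)))))"

text \<open>Elements of K[M] are finitely supported functions M => K; addition is pointwise,
multiplication is convolution.\<close>

definition ma_elem :: "('m \<Rightarrow> 'k::zero) \<Rightarrow> bool" where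
  "ma_elem f \<longleftrightarrow> finite {m. f m \<noteq> 0}"

definition ma_mult :: "('m::monoid_mult \<Rightarrow> 'k::field) \<Rightarrow> ('m \<Rightarrow> 'k) \<Rightarrow> ('m \<Rightarrow> 'k)" where
  "ma_mult f g = (\<lambda>m. \<Sum>p \<in> {p. fst p * snd p = m \<and> f (fst p) \<noteq> 0 \<and> g (snd p) \<noteq> 0}.
                       f (fst p) * g (snd p))"

definition ma_one :: "'m::monoid_mult \<Rightarrow> 'k::field" where
  "ma_one = (\<lambda>m. if m = 1 then 1 else 0)"

text \<open>A d x d matrix is a function nat => nat => K[M], only indices < d are relevant.\<close>

definition ma_matrix :: "nat \<Rightarrow> (nat \<Rightarrow> nat \<Rightarrow> ('m \<Rightarrow> 'k::zero)) \<Rightarrow> bool" where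
  "ma_matrix d X \<longleftrightarrow> (\<forall>i<d. \<forall>j<d. ma_elem (X i j))"

definition ma_mat_mult :: "nat \<Rightarrow> (nat \<Rightarrow> nat \<Rightarrow> ('m::monoid_mult \<Rightarrow> 'k::field))
    \<Rightarrow> (nat \<Rightarrow> nat \<Rightarrow> ('m \<Rightarrow> 'k)) \<Rightarrow> (nat \<Rightarrow> nat \<Rightarrow> ('m \<Rightarrow> 'k))" where
  "ma_mat_mult d X Y = (\<lambda>i j m. \<Sum>l<d. ma_mult (X i l) (Y l j) m)"

definition ma_mat_one :: "nat \<Rightarrow> nat \<Rightarrow> ('m::monoid_mult \<Rightarrow> 'k::field)" where
  "ma_mat_one = (\<lambda>i j. if i = j then ma_one else (\<lambda>_. 0))"

definition ma_mat_eq :: "nat \<Rightarrow> (nat \<Rightarrow> nat \<Rightarrow> 'a) \<Rightarrow> (nat \<Rightarrow> nat \<Rightarrow> 'a) \<Rightarrow> bool" where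
  "ma_mat_eq d X Y \<longleftrightarrow> (\<forall>i<d. \<forall>j<d. X i j = Y i j)"

definition monoid_algebra_stably_finite :: "'m::monoid_mult itself \<Rightarrow> 'k::field itself \<Rightarrow> bool" where
  "monoid_algebra_stably_finite _ _ \<longleftrightarrow>
    (\<forall>d::nat. d \<ge> 1 \<longrightarrow>
      (\<forall>X Y :: nat \<Rightarrow> nat \<Rightarrow> ('m \<Rightarrow> 'k).
        ma_matrix d X \<longrightarrow> ma_matrix d Y \<longrightarrow>
        ma_mat_eq d (ma_mat_mult d X Y) ma_mat_one \<longrightarrow>
        ma_mat_eq d (ma_mat_mult d Y X) ma_mat_one))"

end

theory Submission
  imports Defs "HOL-Library.Function_Algebras" "HOL-Library.Indicator_Function"
begin

text \<open>
  Suppose \<open>XY = 1\<close> but \<open>YX\<close> differs from \<open>1\<close> in entry \<open>(j0, i0)\<close> at the monoid element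
  \<open>k0\<close>. Let \<open>G\<close> contain \<open>1\<close> and the supports of all entries of \<open>X\<close> and \<open>Y\<close>, and take a
  sofic approximation \<open>\<sigma>\<close> on \<open>D\<close> for \<open>F = G G\<close>. A matrix \<open>P\<close> over \<open>K[M]\<close> acts on
  \<open>K^({..<d} \<times> D)\<close> by \<open>x \<mapsto> ((i, v) \<mapsto> \<Sum>j k. P j i k * x (j, \<sigma> k v))\<close>, and at every point
  where \<open>\<sigma>\<close> is multiplicative on \<open>G\<close> this action reverses products. The remaining
  defect set has density at most \<open>|F|\<^sup>2 \<epsilon>\<close>, so \<open>op Y \<circ> op X\<close> is the identity up to rank
  \<open>d |defect|\<close>, and since \<open>rank (AB - 1) \<le> 2 rank (BA - 1)\<close> the operator \<open>op (YX) - 1\<close>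
  has rank \<open>O(\<epsilon> |D|)\<close>. On the other hand \<open>op (YX) - 1\<close> maps the unit vectors at
  \<open>(j0, \<sigma> k0 w)\<close> to vectors whose restrictions to \<open>{i0} \<times> W\<close> are independent, as long as
  \<open>\<sigma> k0\<close> collides on \<open>W\<close> neither with the other \<open>\<sigma> k\<close> nor across points. The
  preimage bound \<open>\<Delta>\<close> makes the collision graph have bounded degree, so a greedy choice gives
  \<open>|W| \<ge> (1 - |F| \<epsilon>) |D| / (2 |F| \<Delta> + 1)\<close>. For small \<open>\<epsilon>\<close> the two rank bounds
  contradict each other.
\<close>

section \<open>Linear algebra of finitely supported functions\<close>

definition scale_fun :: "'k::field \<Rightarrow> ('i \<Rightarrow> 'k) \<Rightarrow> 'i \<Rightarrow> 'k" where
  "scale_fun c x = (\<lambda>p. c * x p)"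

lemma scale_fun_apply [simp]: "scale_fun c x p = c * x p"
  by (simp add: scale_fun_def)

interpretation fun_space: vector_space "scale_fun :: 'k::field \<Rightarrow> ('i \<Rightarrow> 'k) \<Rightarrow> 'i \<Rightarrow> 'k"
  by unfold_locales (auto simp: fun_eq_iff algebra_simps)

interpretation fun_space_pair: vector_space_pair
    "scale_fun :: 'k::field \<Rightarrow> ('i \<Rightarrow> 'k) \<Rightarrow> 'i \<Rightarrow> 'k" "scale_fun :: 'k \<Rightarrow> ('j \<Rightarrow> 'k) \<Rightarrow> 'j \<Rightarrow> 'k"
  by unfold_locales

lemma linear_scale_funI:
  assumes "\<And>x y. f (x + y) = f x + f y" "\<And>c x. f (scale_fun c x) = scale_fun c (f x)"
  shows "Vector_Spaces.linear scale_fun scale_fun f"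
  by (simp add: Vector_Spaces.linear_iff assms fun_space.vector_space_axioms)

definition supported_on :: "'i set \<Rightarrow> ('i \<Rightarrow> 'k::zero) set" where
  "supported_on N = {x. \<forall>q. q \<notin> N \<longrightarrow> x q = 0}"

lemma supported_onI: "(\<And>q. q \<notin> N \<Longrightarrow> x q = 0) \<Longrightarrow> x \<in> supported_on N"
  by (auto simp: supported_on_def)

lemma supported_onD: "x \<in> supported_on N \<Longrightarrow> q \<notin> N \<Longrightarrow> x q = 0"
  by (auto simp: supported_on_def)

lemma supported_on_mono: "M \<subseteq> N \<Longrightarrow> supported_on M \<subseteq> supported_on N"
  by (auto simp: supported_on_def)

lemma indicator_singleton_in_supported_on: "p \<in> N \<Longrightarrow> indicator {p} \<in> supported_on N"
  by (auto simp: supported_on_def indicator_def)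

lemma supported_on_diff:
  "x \<in> supported_on N \<Longrightarrow> y \<in> supported_on N \<Longrightarrow> x - y \<in> (supported_on N :: ('i \<Rightarrow> 'k::ab_group_add) set)"
  by (auto simp: supported_on_def)

lemma sum_apply: "(\<Sum>i\<in>A. f i) x = (\<Sum>i\<in>A. f i x)"
  by (induction A rule: infinite_finite_induct) auto

lemma supported_on_subset_span:
  assumes "finite N"
  shows "supported_on N \<subseteq> fun_space.span ((\<lambda>p. indicator {p}) ` N :: ('i \<Rightarrow> 'k::field) set)"
proof
  fix x :: "'i \<Rightarrow> 'k" assume x: "x \<in> supported_on N"
  have "x = (\<Sum>p\<in>N. scale_fun (x p) (indicator {p}))"
    using assms x
    by (auto simp: fun_eq_iff sum_apply supported_on_def indicator_def of_bool_def if_distrib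
        Int_insert_right cong: if_cong)
  also have "\<dots> \<in> fun_space.span ((\<lambda>p. indicator {p}) ` N)"
    by (intro fun_space.span_sum fun_space.span_scale fun_space.span_base) auto
  finally show "x \<in> fun_space.span ((\<lambda>p. indicator {p}) ` N)" .
qed

lemma independent_scaled_indicators:
  assumes "finite P" "c \<noteq> 0"
  shows "fun_space.independent ((\<lambda>p. scale_fun c (indicator {p})) ` P :: ('i \<Rightarrow> 'k::field) set)"
proof (rule fun_space.independent_if_scalars_zero)
  show "finite ((\<lambda>p. scale_fun c (indicator {p})) ` P :: ('i \<Rightarrow> 'k) set)"
    using assms(1) by simp
next
  fix u and x :: "'i \<Rightarrow> 'k"
  assume sum0: "(\<Sum>x\<in>(\<lambda>p. scale_fun c (indicator {p})) ` P. scale_fun (u x) x) = 0"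
    and "x \<in> (\<lambda>p. scale_fun c (indicator {p})) ` P"
  then obtain p where p: "p \<in> P" "x = scale_fun c (indicator {p})" by auto
  have inj: "inj_on (\<lambda>p. scale_fun c (indicator {p}) :: 'i \<Rightarrow> 'k) P"
    using assms(2) by (auto simp: inj_on_def fun_eq_iff indicator_def split: if_splits)
  have "(\<Sum>q\<in>P. u (scale_fun c (indicator {q})) * (c * indicator {q} p)) = 0"
    using fun_cong[OF sum0, of p] by (simp add: sum.reindex[OF inj] sum_apply mult.assoc)
  then have "u x * c = 0"
    using p assms(1) by (simp add: indicator_def of_bool_def if_distrib cong: if_cong)
  then show "u x = 0" using assms(2) by simp
qed

lemma dim_le_card_of_supported_on:
  assumes "finite N" "U \<subseteq> supported_on N"
  shows "fun_space.dim (U :: ('i \<Rightarrow> 'k::field) set) \<le> card N"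
proof -
  have "fun_space.dim U \<le> card ((\<lambda>p. indicator {p}) ` N :: ('i \<Rightarrow> 'k) set)"
    using assms supported_on_subset_span[OF assms(1)] by (intro fun_space.dim_le_card) auto
  also have "\<dots> \<le> card N" using assms(1) by (rule card_image_le)
  finally show ?thesis .
qed

lemma independent_subset_supported_on:
  assumes "finite N" "B \<subseteq> supported_on N" "fun_space.independent (B :: ('i \<Rightarrow> 'k::field) set)"
  shows "finite B" "card B \<le> card N"
proof -
  have "finite B \<and> card B \<le> card ((\<lambda>p. indicator {p}) ` N :: ('i \<Rightarrow> 'k) set)"
    using assms supported_on_subset_span[OF assms(1)] by (intro fun_space.independent_span_bound) auto
  then show "finite B" "card B \<le> card N"
    using card_image_le[OF assms(1), of "\<lambda>p. indicator {p} :: 'i \<Rightarrow> 'k"] by auto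
qed

lemma card_le_dim_of_supported_on:
  assumes "finite N" "U \<subseteq> supported_on N" "B \<subseteq> U" "fun_space.independent (B :: ('i \<Rightarrow> 'k::field) set)"
  shows "card B \<le> fun_space.dim U"
proof -
  obtain C where C: "C \<subseteq> U" "fun_space.independent C" "U \<subseteq> fun_space.span C" "card C = fun_space.dim U"
    using fun_space.basis_exists by blast
  have "finite C"
    using independent_subset_supported_on(1)[OF assms(1) _ C(2)] C(1) assms(2) by blast
  then show ?thesis using fun_space.independent_span_bound[of C B] C assms by auto
qed

lemma dim_supported_on:
  assumes "finite N"
  shows "fun_space.dim (supported_on N :: ('i \<Rightarrow> 'k::field) set) = card N"
proof (rule antisym)
  have "card N = card ((\<lambda>p. scale_fun 1 (indicator {p})) ` N :: ('i \<Rightarrow> 'k) set)"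
    by (rule card_image[symmetric]) (auto simp: inj_on_def fun_eq_iff indicator_def split: if_splits)
  also have "\<dots> \<le> fun_space.dim (supported_on N :: ('i \<Rightarrow> 'k) set)"
    using assms independent_scaled_indicators[OF assms, of 1]
    by (intro card_le_dim_of_supported_on) (auto intro: indicator_singleton_in_supported_on)
  finally show "card N \<le> fun_space.dim (supported_on N :: ('i \<Rightarrow> 'k) set)" .
qed (use dim_le_card_of_supported_on assms in blast)

lemma dim_linear_image_le:
  fixes f :: "('i \<Rightarrow> 'k::field) \<Rightarrow> ('j \<Rightarrow> 'k)"
  assumes "finite N" "U \<subseteq> supported_on N" "Vector_Spaces.linear scale_fun scale_fun f"
  shows "fun_space.dim (f ` U) \<le> fun_space.dim U"
proof -
  obtain C where C: "C \<subseteq> U" "fun_space.independent C" "U \<subseteq> fun_space.span C" "card C = fun_space.dim U"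
    using fun_space.basis_exists by blast
  have "finite C"
    using independent_subset_supported_on(1)[OF assms(1) _ C(2)] C(1) assms(2) by blast
  have "f ` U \<subseteq> fun_space.span (f ` C)"
    using fun_space_pair.linear_spans_image[OF assms(3) C(3)] .
  then have "fun_space.dim (f ` U) \<le> card (f ` C)"
    using \<open>finite C\<close> by (intro fun_space.dim_le_card) auto
  also have "\<dots> \<le> card C" using \<open>finite C\<close> by (rule card_image_le)
  finally show ?thesis using C by simp
qed

lemma dim_le_dim_add_dim:
  assumes "finite N" "T \<subseteq> supported_on N" "E \<subseteq> supported_on N"
    and "S \<subseteq> fun_space.span (T \<union> E :: ('i \<Rightarrow> 'k::field) set)"
  shows "fun_space.dim S \<le> fun_space.dim T + fun_space.dim E"
proof -
  obtain C where C: "C \<subseteq> T" "fun_space.independent C" "T \<subseteq> fun_space.span C" "card C = fun_space.dim T"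
    using fun_space.basis_exists by blast
  obtain C' where C': "C' \<subseteq> E" "fun_space.independent C'" "E \<subseteq> fun_space.span C'" "card C' = fun_space.dim E"
    using fun_space.basis_exists by blast
  have fin: "finite C" "finite C'"
    using independent_subset_supported_on(1)[OF assms(1) _ C(2)]
      independent_subset_supported_on(1)[OF assms(1) _ C'(2)] C(1) C'(1) assms(2,3) by blast+
  have "T \<union> E \<subseteq> fun_space.span (C \<union> C')"
    using C(3) C'(3) fun_space.span_mono[of C "C \<union> C'"] fun_space.span_mono[of C' "C \<union> C'"] by blast
  then have "S \<subseteq> fun_space.span (C \<union> C')"
    using assms(4) fun_space.span_minimal[OF _ fun_space.subspace_span] by blast
  then have "fun_space.dim S \<le> card (C \<union> C')"
    using fin by (intro fun_space.dim_le_card) auto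
  also have "\<dots> \<le> card C + card C'" by (rule card_Un_le)
  finally show ?thesis using C C' by simp
qed

lemma exists_complement_in_supported_on:
  assumes "finite N" "U \<subseteq> supported_on N"
  obtains E where "E \<subseteq> supported_on N" "finite E" "card E + fun_space.dim U = card N"
    "supported_on N \<subseteq> fun_space.span (U \<union> E :: ('i \<Rightarrow> 'k::field) set)"
proof -
  obtain C where C: "C \<subseteq> U" "fun_space.independent C" "U \<subseteq> fun_space.span C" "card C = fun_space.dim U"
    using fun_space.basis_exists by blast
  obtain C' where C': "C \<subseteq> C'" "C' \<subseteq> supported_on N" "fun_space.independent C'"
    "supported_on N \<subseteq> fun_space.span C'"
    using fun_space.maximal_independent_subset_extend[of C "supported_on N"] C(1,2) assms(2) by blast
  have "finite C'" using independent_subset_supported_on(1)[OF assms(1) C'(2,3)] .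
  have "card C' = card N"
    using fun_space.basis_card_eq_dim[OF C'(2,4,3)] dim_supported_on[OF assms(1)] by simp
  then have "card (C' - C) + fun_space.dim U = card N"
    using C'(1) C(4) \<open>finite C'\<close> card_Diff_subset[of C C'] card_mono[of C' C] finite_subset[of C C']
    by simp
  moreover have "supported_on N \<subseteq> fun_space.span (U \<union> (C' - C))"
    using C'(4) C(1) fun_space.span_mono[of C' "U \<union> (C' - C)"] by blast
  moreover have "C' - C \<subseteq> supported_on N" "finite (C' - C)"
    using C'(2) \<open>finite C'\<close> by auto
  ultimately show ?thesis
    using that by blast
qed

lemma dim_image_le_dim_image_add_dim:
  assumes "finite N" "g ` U \<subseteq> supported_on N" "E \<subseteq> supported_on N"
    and "\<And>x. x \<in> U \<Longrightarrow> f x - g x \<in> fun_space.span (E :: ('i \<Rightarrow> 'k::field) set)"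
  shows "fun_space.dim (f ` U) \<le> fun_space.dim (g ` U) + fun_space.dim E"
proof (rule dim_le_dim_add_dim[OF assms(1-3)])
  show "f ` U \<subseteq> fun_space.span (g ` U \<union> E)"
  proof
    fix y assume "y \<in> f ` U"
    then obtain x where x: "x \<in> U" "y = f x" by blast
    have "g x \<in> fun_space.span (g ` U \<union> E)" "f x - g x \<in> fun_space.span (g ` U \<union> E)"
      using x(1) assms(4)[OF x(1)] fun_space.span_mono[of E "g ` U \<union> E"]
      by (auto intro: fun_space.span_base)
    then show "y \<in> fun_space.span (g ` U \<union> E)"
      using fun_space.span_add[of "g x" _ "f x - g x"] x(2) by fastforce
  qed
qed

lemma linear_comp_minus_id:
  assumes "Vector_Spaces.linear scale_fun scale_fun A" "Vector_Spaces.linear scale_fun scale_fun B"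
  shows "Vector_Spaces.linear scale_fun scale_fun (\<lambda>z. A (B z) - (z :: 'i \<Rightarrow> 'k::field))"
  by (rule linear_scale_funI)
    (simp_all add: fun_space_pair.linear_add[OF assms(1)] fun_space_pair.linear_add[OF assms(2)]
      fun_space_pair.linear_scale[OF assms(1)] fun_space_pair.linear_scale[OF assms(2)]
      fun_eq_iff algebra_simps)

lemma dim_image_comp_minus_id_le:
  fixes A B :: "('i \<Rightarrow> 'k::field) \<Rightarrow> ('i \<Rightarrow> 'k)"
  assumes N: "finite N"
    and A: "Vector_Spaces.linear scale_fun scale_fun A" "A ` supported_on N \<subseteq> supported_on N"
    and B: "Vector_Spaces.linear scale_fun scale_fun B" "B ` supported_on N \<subseteq> supported_on N"
  shows "fun_space.dim ((\<lambda>z. A (B z) - z) ` supported_on N)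
    \<le> 2 * fun_space.dim ((\<lambda>y. B (A y) - y) ` supported_on N)"
  \<comment> \<open>\<open>A\<close> has corank at most \<open>r\<close>, and on the range of \<open>A\<close> the map \<open>AB - 1\<close> is \<open>A (BA - 1)\<close>.\<close>
proof -
  let ?V = "supported_on N :: ('i \<Rightarrow> 'k) set"
  let ?\<Psi> = "\<lambda>z. A (B z) - z" and ?E = "(\<lambda>y. B (A y) - y) ` ?V"
  let ?r = "fun_space.dim ?E"
  have EV: "?E \<subseteq> ?V" using A(2) B(2) by (auto intro: supported_on_diff)
  have \<Psi>V: "?\<Psi> ` ?V \<subseteq> ?V" using A(2) B(2) by (auto intro!: supported_on_diff)
  have "card N = fun_space.dim (id ` ?V)" by (simp add: dim_supported_on[OF N])
  also have "\<dots> \<le> fun_space.dim ((\<lambda>y. B (A y)) ` ?V) + ?r"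
  proof (rule dim_image_le_dim_image_add_dim[OF N _ EV])
    show "(\<lambda>y. B (A y)) ` ?V \<subseteq> ?V" using A(2) B(2) by auto
    fix y assume "y \<in> ?V"
    then have "B (A y) - y \<in> fun_space.span ?E" by (auto intro: fun_space.span_base)
    then show "id y - B (A y) \<in> fun_space.span ?E"
      using fun_space.span_neg by fastforce
  qed
  finally have "card N \<le> fun_space.dim ((\<lambda>y. B (A y)) ` ?V) + ?r" .
  moreover have "fun_space.dim ((\<lambda>y. B (A y)) ` ?V) \<le> fun_space.dim (A ` ?V)"
    using dim_linear_image_le[OF N A(2) B(1)] by (simp add: image_image)
  ultimately have rank_A: "card N \<le> fun_space.dim (A ` ?V) + ?r" by linarith
  obtain C where C: "C \<subseteq> ?V" "finite C" "card C + fun_space.dim (A ` ?V) = card N"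
    "?V \<subseteq> fun_space.span (A ` ?V \<union> C)"
    using exists_complement_in_supported_on[OF N A(2)] by blast
  have lin_\<Psi>: "Vector_Spaces.linear scale_fun scale_fun ?\<Psi>"
    using linear_comp_minus_id[OF A(1) B(1)] .
  have "?\<Psi> ` ?V \<subseteq> fun_space.span (?\<Psi> ` (A ` ?V) \<union> ?\<Psi> ` C)"
    using fun_space_pair.linear_spans_image[OF lin_\<Psi> C(4)] by (simp add: image_Un)
  then have "fun_space.dim (?\<Psi> ` ?V) \<le> fun_space.dim (?\<Psi> ` (A ` ?V)) + fun_space.dim (?\<Psi> ` C)"
    by (intro dim_le_dim_add_dim[OF N] subset_trans[OF image_mono \<Psi>V] A(2) C(1))
  also have "?\<Psi> ` (A ` ?V) = A ` ?E"
    by (force simp: fun_space_pair.linear_diff[OF A(1)])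
  also have "fun_space.dim (A ` ?E) \<le> ?r"
    using dim_linear_image_le[OF N EV A(1)] .
  also have "fun_space.dim (?\<Psi> ` C) \<le> card C"
    using C(2) fun_space.dim_le_card'[of "?\<Psi> ` C"] card_image_le[of C ?\<Psi>] by simp
  also have "card C \<le> ?r" using C(3) rank_A by simp
  finally show ?thesis by linarith
qed

lemma card_le_dim_if_restrictions_contain_indicators:
  assumes "finite N" "U \<subseteq> supported_on N" "finite P" "c \<noteq> 0"
    and "\<And>p. p \<in> P \<Longrightarrow> \<exists>u\<in>U. \<forall>q\<in>P. u q = (if q = p then c else 0)"
  shows "card P \<le> fun_space.dim (U :: ('i \<Rightarrow> 'k::field) set)"
proof -
  define restrict :: "('i \<Rightarrow> 'k) \<Rightarrow> 'i \<Rightarrow> 'k" where "restrict x q = (if q \<in> P then x q else 0)" for x q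
  let ?I = "(\<lambda>p. scale_fun c (indicator {p})) ` P :: ('i \<Rightarrow> 'k) set"
  have lin: "Vector_Spaces.linear scale_fun scale_fun restrict"
    by (rule linear_scale_funI) (auto simp: restrict_def fun_eq_iff)
  have "?I \<subseteq> restrict ` U"
  proof
    fix e assume "e \<in> ?I"
    then obtain p where p: "p \<in> P" "e = scale_fun c (indicator {p})" by blast
    then obtain u where "u \<in> U" "\<forall>q\<in>P. u q = (if q = p then c else 0)" using assms(5) by blast
    then have "restrict u = e" "u \<in> U" using p by (auto simp: restrict_def fun_eq_iff indicator_def)
    then show "e \<in> restrict ` U" by blast
  qed
  moreover have "restrict ` U \<subseteq> supported_on P" by (auto simp: restrict_def supported_on_def)
  ultimately have "card ?I \<le> fun_space.dim (restrict ` U)"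
    by (intro card_le_dim_of_supported_on[OF assms(3)] independent_scaled_indicators assms(3,4))
  also have "\<dots> \<le> fun_space.dim U" using dim_linear_image_le[OF assms(1,2) lin] .
  finally have "card ?I \<le> fun_space.dim U" .
  moreover have "inj_on (\<lambda>p. scale_fun c (indicator {p}) :: 'i \<Rightarrow> 'k) P"
    using assms(4) by (auto simp: inj_on_def fun_eq_iff indicator_def split: if_splits)
  ultimately show ?thesis by (simp add: card_image)
qed

section \<open>Matrices over the monoid algebra acting through a map system\<close>

lemma ma_mult_eq_sum:
  assumes "ma_elem f" "ma_elem g"
  shows "ma_mult f g m = (\<Sum>p\<in>{p \<in> {a. f a \<noteq> 0} \<times> {b. g b \<noteq> 0}. fst p * snd p = m}. f (fst p) * g (snd p))"
  unfolding ma_mult_def by (rule sum.cong) auto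

lemma ma_mult_support:
  "{m. ma_mult f g m \<noteq> 0} \<subseteq> (\<lambda>p. fst p * snd p) ` ({a. f a \<noteq> 0} \<times> {b. g b \<noteq> 0})"
proof
  fix m assume "m \<in> {m. ma_mult f g m \<noteq> 0}"
  then have "(\<Sum>p\<in>{p. fst p * snd p = m \<and> f (fst p) \<noteq> 0 \<and> g (snd p) \<noteq> 0}. f (fst p) * g (snd p)) \<noteq> 0"
    by (simp add: ma_mult_def)
  then obtain p where "p \<in> {p. fst p * snd p = m \<and> f (fst p) \<noteq> 0 \<and> g (snd p) \<noteq> 0}"
    by (rule sum.not_neutral_contains_not_neutral)
  then show "m \<in> (\<lambda>p. fst p * snd p) ` ({a. f a \<noteq> 0} \<times> {b. g b \<noteq> 0})"
    by (intro image_eqI[of _ _ p]) (auto simp: mem_Times_iff)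
qed

lemma ma_elem_ma_mult: "ma_elem f \<Longrightarrow> ma_elem g \<Longrightarrow> ma_elem (ma_mult f g)"
  unfolding ma_elem_def by (rule finite_subset[OF ma_mult_support]) simp

definition sofic_action :: "('m \<Rightarrow> nat \<Rightarrow> nat) \<Rightarrow> ('m \<Rightarrow> 'k::field) \<Rightarrow> (nat \<Rightarrow> 'k) \<Rightarrow> nat \<Rightarrow> 'k" where
  "sofic_action \<sigma> f y v = (\<Sum>k\<in>{k. f k \<noteq> 0}. f k * y (\<sigma> k v))"

lemma sofic_action_eq_sum:
  assumes "finite S" "{k. f k \<noteq> 0} \<subseteq> S"
  shows "sofic_action \<sigma> f y v = (\<Sum>k\<in>S. f k * y (\<sigma> k v))"
  unfolding sofic_action_def using assms by (intro sum.mono_neutral_left) auto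

lemma sofic_action_cong:
  "(\<And>k. f k \<noteq> 0 \<Longrightarrow> y (\<sigma> k v) = y' (\<sigma> k v)) \<Longrightarrow> sofic_action \<sigma> f y v = sofic_action \<sigma> f y' v"
  unfolding sofic_action_def by (intro sum.cong) auto

lemma sofic_action_ma_one: "sofic_action \<sigma> ma_one y v = y (\<sigma> 1 v)"
  by (simp add: sofic_action_def ma_one_def)

lemma sofic_action_zero: "sofic_action \<sigma> (\<lambda>_. 0) y v = 0"
  by (simp add: sofic_action_def)

lemma sofic_action_sum_right:
  "sofic_action \<sigma> f (\<lambda>u. \<Sum>l\<in>L. y l u) v = (\<Sum>l\<in>L. sofic_action \<sigma> f (y l) v)"
  unfolding sofic_action_def by (simp add: sum_distrib_left sum.swap[of _ L])

lemma sofic_action_sum_left: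
  assumes "finite J" "\<And>j. j \<in> J \<Longrightarrow> ma_elem (f j)"
  shows "sofic_action \<sigma> (\<lambda>m. \<Sum>j\<in>J. f j m) y v = (\<Sum>j\<in>J. sofic_action \<sigma> (f j) y v)"
proof -
  define S where "S = (\<Union>j\<in>J. {k. f j k \<noteq> 0})"
  have S: "finite S" using assms by (auto simp: S_def ma_elem_def)
  have "{k. (\<Sum>j\<in>J. f j k) \<noteq> 0} \<subseteq> S"
    by (auto simp: S_def dest: sum.not_neutral_contains_not_neutral)
  then have "sofic_action \<sigma> (\<lambda>m. \<Sum>j\<in>J. f j m) y v = (\<Sum>k\<in>S. (\<Sum>j\<in>J. f j k) * y (\<sigma> k v))"
    by (rule sofic_action_eq_sum[OF S])
  also have "\<dots> = (\<Sum>j\<in>J. \<Sum>k\<in>S. f j k * y (\<sigma> k v))"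
    by (simp add: sum_distrib_right sum.swap[of _ S])
  also have "\<dots> = (\<Sum>j\<in>J. sofic_action \<sigma> (f j) y v)"
    using S by (intro sum.cong refl sofic_action_eq_sum[symmetric]) (auto simp: S_def)
  finally show ?thesis .
qed

lemma sofic_action_ma_mult:
  assumes "ma_elem f" "ma_elem g"
    and mult: "\<And>a b. f a \<noteq> 0 \<Longrightarrow> g b \<noteq> 0 \<Longrightarrow> \<sigma> (a * b) v = \<sigma> a (\<sigma> b v)"
  shows "sofic_action \<sigma> (ma_mult f g) y v = sofic_action \<sigma> g (sofic_action \<sigma> f y) v"
proof -
  let ?Sf = "{a. f a \<noteq> 0}" and ?Sg = "{b. g b \<noteq> 0}"
  let ?S = "(\<lambda>p. fst p * snd p) ` (?Sf \<times> ?Sg)"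
  have fin: "finite ?Sf" "finite ?Sg" using assms(1,2) by (auto simp: ma_elem_def)
  have "sofic_action \<sigma> (ma_mult f g) y v = (\<Sum>m\<in>?S. ma_mult f g m * y (\<sigma> m v))"
    using fin by (intro sofic_action_eq_sum ma_mult_support) auto
  also have "\<dots> = (\<Sum>m\<in>?S. \<Sum>p\<in>{p \<in> ?Sf \<times> ?Sg. fst p * snd p = m}.
      f (fst p) * g (snd p) * y (\<sigma> (fst p * snd p) v))"
    by (simp add: ma_mult_eq_sum[OF assms(1,2)] sum_distrib_right)
  also have "\<dots> = (\<Sum>p\<in>?Sf \<times> ?Sg. f (fst p) * g (snd p) * y (\<sigma> (fst p * snd p) v))"
    using fin by (intro sum.group) auto
  also have "\<dots> = (\<Sum>a\<in>?Sf. \<Sum>b\<in>?Sg. f a * g b * y (\<sigma> a (\<sigma> b v)))"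
    by (subst sum.cartesian_product) (auto intro!: sum.cong simp: mult)
  also have "\<dots> = (\<Sum>b\<in>?Sg. g b * (\<Sum>a\<in>?Sf. f a * y (\<sigma> a (\<sigma> b v))))"
    by (subst sum.swap) (simp add: sum_distrib_left mult_ac)
  also have "\<dots> = sofic_action \<sigma> g (sofic_action \<sigma> f y) v"
    by (simp add: sofic_action_def)
  finally show ?thesis .
qed

definition mat_supported_in :: "nat \<Rightarrow> 'm set \<Rightarrow> (nat \<Rightarrow> nat \<Rightarrow> 'm \<Rightarrow> 'k::zero) \<Rightarrow> bool" where
  "mat_supported_in d G P \<longleftrightarrow> (\<forall>i<d. \<forall>j<d. {k. P i j k \<noteq> 0} \<subseteq> G)"

lemma mat_supported_inD: "mat_supported_in d G P \<Longrightarrow> i < d \<Longrightarrow> j < d \<Longrightarrow> P i j k \<noteq> 0 \<Longrightarrow> k \<in> G"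
  by (auto simp: mat_supported_in_def)

lemma ma_elem_if_mat_supported_in:
  "finite G \<Longrightarrow> mat_supported_in d G P \<Longrightarrow> i < d \<Longrightarrow> j < d \<Longrightarrow> ma_elem (P i j)"
  unfolding ma_elem_def mat_supported_in_def by (meson finite_subset)

lemma obtain_common_support:
  assumes "ma_matrix d X" "ma_matrix d Y"
  obtains G where "finite G" "1 \<in> G" "mat_supported_in d G X" "mat_supported_in d G Y"
proof
  let ?G = "insert 1 (\<Union>i<d. \<Union>j<d. {k. X i j k \<noteq> 0} \<union> {k. Y i j k \<noteq> 0})"
  show "finite ?G" using assms by (auto simp: ma_matrix_def ma_elem_def)
  show "1 \<in> ?G" "mat_supported_in d ?G X" "mat_supported_in d ?G Y"
    by (auto simp: mat_supported_in_def)
qed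

lemma mat_supported_in_ma_mat_mult:
  assumes "mat_supported_in d G P" "mat_supported_in d G Q"
  shows "mat_supported_in d ((\<lambda>(a, b). a * b) ` (G \<times> G)) (ma_mat_mult d P Q)"
  unfolding mat_supported_in_def
proof (intro allI impI subsetI)
  fix i j m assume ij: "i < d" "j < d" and "m \<in> {m. ma_mat_mult d P Q i j m \<noteq> 0}"
  then have "(\<Sum>l<d. ma_mult (P i l) (Q l j) m) \<noteq> 0" by (simp add: ma_mat_mult_def)
  then obtain l where l: "l < d" "ma_mult (P i l) (Q l j) m \<noteq> 0"
    by (rule sum.not_neutral_contains_not_neutral) simp
  then have "m \<in> (\<lambda>p. fst p * snd p) ` ({a. P i l a \<noteq> 0} \<times> {b. Q l j b \<noteq> 0})"
    using ma_mult_support by blast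
  then obtain a b where "m = a * b" "P i l a \<noteq> 0" "Q l j b \<noteq> 0" by auto
  then show "m \<in> (\<lambda>(a, b). a * b) ` (G \<times> G)"
    using assms ij l(1) by (force dest: mat_supported_inD)
qed

definition sofic_op :: "nat \<Rightarrow> nat set \<Rightarrow> ('m \<Rightarrow> nat \<Rightarrow> nat) \<Rightarrow> (nat \<Rightarrow> nat \<Rightarrow> 'm \<Rightarrow> 'k::field)
    \<Rightarrow> (nat \<times> nat \<Rightarrow> 'k) \<Rightarrow> nat \<times> nat \<Rightarrow> 'k" where
  "sofic_op d D \<sigma> P x = (\<lambda>(i, v). if i < d \<and> v \<in> D
     then \<Sum>j<d. sofic_action \<sigma> (P j i) (\<lambda>u. x (j, u)) v else 0)"

lemma sofic_op_apply:
  "i < d \<Longrightarrow> v \<in> D \<Longrightarrow> sofic_op d D \<sigma> P x (i, v) = (\<Sum>j<d. sofic_action \<sigma> (P j i) (\<lambda>u. x (j, u)) v)"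
  by (simp add: sofic_op_def)

lemma sofic_op_supported: "sofic_op d D \<sigma> P x \<in> supported_on ({..<d} \<times> D)"
  by (auto simp: sofic_op_def supported_on_def)

lemma linear_sofic_op: "Vector_Spaces.linear scale_fun scale_fun (sofic_op d D \<sigma> P)"
  by (rule linear_scale_funI)
    (auto simp: sofic_op_def sofic_action_def fun_eq_iff algebra_simps sum.distrib sum_distrib_left)

lemma sofic_op_cong:
  assumes "ma_mat_eq d P Q"
  shows "sofic_op d D \<sigma> P = sofic_op d D \<sigma> Q"
proof -
  have eq: "P j i = Q j i" if "j < d" "i < d" for i j
    using assms that by (simp add: ma_mat_eq_def)
  show ?thesis unfolding sofic_op_def by (intro ext) (auto simp: eq split: prod.split intro!: sum.cong)
qed

lemma sofic_op_ma_mat_one: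
  assumes "i < d" "v \<in> D" "\<sigma> 1 v = v"
  shows "sofic_op d D \<sigma> ma_mat_one x (i, v) = x (i, v)"
proof -
  have "sofic_action \<sigma> (ma_mat_one j i) (\<lambda>u. x (j, u)) v = (if j = i then x (i, v) else 0)" for j
    using assms(3) by (cases "j = i") (simp_all add: ma_mat_one_def sofic_action_ma_one sofic_action_zero)
  then show ?thesis using assms(1,2) by (simp add: sofic_op_apply)
qed

definition sofic_defect :: "nat set \<Rightarrow> ('m::monoid_mult \<Rightarrow> nat \<Rightarrow> nat) \<Rightarrow> 'm set \<Rightarrow> nat set" where
  "sofic_defect D \<sigma> G = {v \<in> D. \<exists>a\<in>G. \<exists>b\<in>G. \<sigma> (a * b) v \<noteq> \<sigma> a (\<sigma> b v)}"

lemma sofic_op_ma_mat_mult: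
  assumes "finite G" "mat_supported_in d G P" "mat_supported_in d G Q"
    and "\<forall>k. \<sigma> k ` D \<subseteq> D" "i < d" "v \<in> D" "v \<notin> sofic_defect D \<sigma> G"
  shows "sofic_op d D \<sigma> (ma_mat_mult d P Q) x (i, v) = sofic_op d D \<sigma> Q (sofic_op d D \<sigma> P x) (i, v)"
proof -
  have mult: "\<sigma> (a * b) v = \<sigma> a (\<sigma> b v)" if "a \<in> G" "b \<in> G" for a b
    using assms(6,7) that by (auto simp: sofic_defect_def)
  have elem: "ma_elem (P l j)" "ma_elem (Q l j)" if "l < d" "j < d" for l j
    using ma_elem_if_mat_supported_in assms(1-3) that by blast+
  have "sofic_op d D \<sigma> (ma_mat_mult d P Q) x (i, v)
      = (\<Sum>l<d. sofic_action \<sigma> (\<lambda>m. \<Sum>j<d. ma_mult (P l j) (Q j i) m) (\<lambda>u. x (l, u)) v)"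
    using assms(5,6) by (simp add: sofic_op_apply ma_mat_mult_def)
  also have "\<dots> = (\<Sum>l<d. \<Sum>j<d. sofic_action \<sigma> (ma_mult (P l j) (Q j i)) (\<lambda>u. x (l, u)) v)"
    using assms(5) by (intro sum.cong refl sofic_action_sum_left) (auto intro: ma_elem_ma_mult elem)
  also have "\<dots> = (\<Sum>l<d. \<Sum>j<d. sofic_action \<sigma> (Q j i) (sofic_action \<sigma> (P l j) (\<lambda>u. x (l, u))) v)"
  proof (intro sum.cong refl)
    fix l j assume "l \<in> {..<d}" "j \<in> {..<d}"
    then show "sofic_action \<sigma> (ma_mult (P l j) (Q j i)) (\<lambda>u. x (l, u)) v
        = sofic_action \<sigma> (Q j i) (sofic_action \<sigma> (P l j) (\<lambda>u. x (l, u))) v"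
      using assms(5) mat_supported_inD[OF assms(2)] mat_supported_inD[OF assms(3)]
      by (intro sofic_action_ma_mult elem mult) auto
  qed
  also have "\<dots> = (\<Sum>j<d. sofic_action \<sigma> (Q j i) (\<lambda>u. \<Sum>l<d. sofic_action \<sigma> (P l j) (\<lambda>u. x (l, u)) u) v)"
    by (subst sum.swap) (simp add: sofic_action_sum_right)
  also have "\<dots> = sofic_op d D \<sigma> Q (sofic_op d D \<sigma> P x) (i, v)"
    using assms(4-6) by (auto simp: sofic_op_apply image_subset_iff intro!: sum.cong sofic_action_cong)
  finally show ?thesis .
qed

section \<open>Rank bounds for the induced operators\<close>

lemma diff_in_supported_onI:
  assumes "x \<in> supported_on N" "y \<in> supported_on N" "\<And>q. q \<in> N - R \<Longrightarrow> x q = y q"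
  shows "x - y \<in> (supported_on R :: ('i \<Rightarrow> 'k::ab_group_add) set)"
proof (rule supported_onI)
  fix q assume "q \<notin> R"
  then show "(x - y) q = 0"
    using assms supported_onD[of x N q] supported_onD[of y N q] by (cases "q \<in> N") auto
qed

lemma dim_sofic_op_minus_id_le:
  fixes X Y :: "nat \<Rightarrow> nat \<Rightarrow> 'm::monoid_mult \<Rightarrow> 'k::field"
  assumes D: "finite D" "\<forall>k. \<sigma> k ` D \<subseteq> D" "\<forall>v\<in>D. \<sigma> 1 v = v"
    and G: "finite G" "mat_supported_in d G X" "mat_supported_in d G Y"
    and XY: "ma_mat_eq d (ma_mat_mult d X Y) ma_mat_one"
  shows "fun_space.dim ((\<lambda>x. sofic_op d D \<sigma> (ma_mat_mult d Y X) x - x) ` supported_on ({..<d} \<times> D))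
    \<le> 3 * (d * card (sofic_defect D \<sigma> G))"
proof -
  let ?N = "{..<d} \<times> D" and ?R = "{..<d} \<times> sofic_defect D \<sigma> G"
  let ?V = "supported_on ?N :: (nat \<times> nat \<Rightarrow> 'k) set"
  let ?A = "sofic_op d D \<sigma> X" and ?B = "sofic_op d D \<sigma> Y" and ?T = "sofic_op d D \<sigma> (ma_mat_mult d Y X)"
  have N: "finite ?N" "finite ?R" using D(1) by (auto simp: sofic_defect_def)
  have BA: "?B (?A y) - y \<in> supported_on ?R" if y: "y \<in> ?V" for y
  proof (rule diff_in_supported_onI[OF sofic_op_supported y])
    fix q assume q: "q \<in> ?N - ?R"
    then obtain i v where [simp]: "q = (i, v)" and iv: "i < d" "v \<in> D" "v \<notin> sofic_defect D \<sigma> G"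
      by auto
    have "?B (?A y) (i, v) = sofic_op d D \<sigma> (ma_mat_mult d X Y) y (i, v)"
      by (rule sofic_op_ma_mat_mult[OF G D(2) iv, symmetric])
    also have "\<dots> = y (i, v)"
      using D(3) iv by (simp add: sofic_op_cong[OF XY] sofic_op_ma_mat_one)
    finally show "?B (?A y) q = y q" by simp
  qed
  have T: "?T z - ?A (?B z) \<in> supported_on ?R" for z
  proof (rule diff_in_supported_onI[OF sofic_op_supported sofic_op_supported])
    fix q assume q: "q \<in> ?N - ?R"
    then obtain i v where [simp]: "q = (i, v)" and iv: "i < d" "v \<in> D" "v \<notin> sofic_defect D \<sigma> G"
      by auto
    show "?T z q = ?A (?B z) q"
      using sofic_op_ma_mat_mult[OF G(1,3,2) D(2) iv] by simp
  qed
  have "fun_space.dim ((\<lambda>x. ?T x - x) ` ?V)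
      \<le> fun_space.dim ((\<lambda>x. ?A (?B x) - x) ` ?V) + fun_space.dim (supported_on ?R :: (nat \<times> nat \<Rightarrow> 'k) set)"
  proof (rule dim_image_le_dim_image_add_dim[OF N(1)])
    show "(\<lambda>x. ?A (?B x) - x) ` ?V \<subseteq> ?V"
      by (auto intro!: supported_on_diff sofic_op_supported)
    show "supported_on ?R \<subseteq> ?V" by (rule supported_on_mono) (auto simp: sofic_defect_def)
    fix x
    have "?T x - x - (?A (?B x) - x) \<in> supported_on ?R" using T by simp
    then show "?T x - x - (?A (?B x) - x) \<in> fun_space.span (supported_on ?R)"
      by (rule fun_space.span_base)
  qed
  moreover have "fun_space.dim ((\<lambda>x. ?A (?B x) - x) ` ?V) \<le> 2 * fun_space.dim ((\<lambda>y. ?B (?A y) - y) ` ?V)"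
    by (intro dim_image_comp_minus_id_le N(1) linear_sofic_op) (auto intro: sofic_op_supported)
  moreover have "fun_space.dim ((\<lambda>y. ?B (?A y) - y) ` ?V) \<le> card ?R"
    using BA by (intro dim_le_card_of_supported_on N(2)) auto
  moreover have "fun_space.dim (supported_on ?R :: (nat \<times> nat \<Rightarrow> 'k) set) = card ?R"
    by (rule dim_supported_on[OF N(2)])
  moreover have "card ?R = d * card (sofic_defect D \<sigma> G)" by (simp add: card_cartesian_product)
  ultimately show ?thesis by linarith
qed

lemma card_le_dim_sofic_op_minus_id:
  fixes P :: "nat \<Rightarrow> nat \<Rightarrow> 'm::monoid_mult \<Rightarrow> 'k::field"
  assumes D: "finite D" "\<forall>k. \<sigma> k ` D \<subseteq> D" "\<forall>v\<in>D. \<sigma> 1 v = v"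
    and F: "finite F" "1 \<in> F" "k0 \<in> F" "mat_supported_in d F P"
    and entry: "j0 < d" "i0 < d" "P j0 i0 k0 \<noteq> ma_mat_one j0 i0 k0"
    and W: "W \<subseteq> D"
    and separated: "\<And>v w k. v \<in> W \<Longrightarrow> w \<in> W \<Longrightarrow> k \<in> F \<Longrightarrow> \<sigma> k v = \<sigma> k0 w \<Longrightarrow> k = k0 \<and> v = w"
  shows "card W \<le> fun_space.dim ((\<lambda>x. sofic_op d D \<sigma> P x - x) ` supported_on ({..<d} \<times> D))"
proof -
  let ?N = "{..<d} \<times> D" and ?\<Phi> = "\<lambda>x. sofic_op d D \<sigma> P x - x"
  define c where "c = P j0 i0 k0 - ma_mat_one j0 i0 k0"
  have op: "sofic_op d D \<sigma> P (indicator {(j0, \<sigma> k0 w)}) (i0, v) = (if v = w then P j0 i0 k0 else 0)"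
    if "v \<in> W" "w \<in> W" for v w
  proof -
    have row: "(\<lambda>u. indicator {(j0, \<sigma> k0 w)} (j, u)) = (if j = j0 then indicator {\<sigma> k0 w} else (\<lambda>_. 0))"
      for j :: nat by (auto simp: indicator_def)
    have "v \<in> D" using W that(1) by blast
    then have "sofic_op d D \<sigma> P (indicator {(j0, \<sigma> k0 w)}) (i0, v)
        = (\<Sum>j<d. sofic_action \<sigma> (P j i0) (\<lambda>u. indicator {(j0, \<sigma> k0 w)} (j, u)) v)"
      by (rule sofic_op_apply[OF entry(2)])
    also have "\<dots> = (\<Sum>j<d. if j = j0 then sofic_action \<sigma> (P j0 i0) (indicator {\<sigma> k0 w}) v else 0)"
      by (intro sum.cong refl) (simp add: row sofic_action_def)
    also have "\<dots> = sofic_action \<sigma> (P j0 i0) (indicator {\<sigma> k0 w}) v"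
      using entry(1) by simp
    also have "\<dots> = (\<Sum>k\<in>F. P j0 i0 k * indicator {\<sigma> k0 w} (\<sigma> k v))"
      using F(1) mat_supported_inD[OF F(4) entry(1,2)] by (intro sofic_action_eq_sum) auto
    also have "\<dots> = (\<Sum>k\<in>F. if k = k0 \<and> v = w then P j0 i0 k else 0)"
      using separated[OF that] by (intro sum.cong refl) (auto simp: indicator_def)
    finally show ?thesis using F(1,3) by simp
  qed
  have ind: "indicator {(j0, \<sigma> k0 w)} (i0, v) = (if v = w then ma_mat_one j0 i0 k0 else 0 :: 'k)"
    if "v \<in> W" "w \<in> W" for v w
  proof -
    have "\<sigma> 1 v = v" using D(3) W that(1) by blast
    then have "(i0, v) = (j0, \<sigma> k0 w) \<longleftrightarrow> i0 = j0 \<and> k0 = 1 \<and> v = w"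
      using separated[OF that F(2)] by auto
    then show ?thesis by (auto simp: indicator_def ma_mat_one_def ma_one_def)
  qed
  have "card ({i0} \<times> W) \<le> fun_space.dim (?\<Phi> ` supported_on ?N)"
  proof (rule card_le_dim_if_restrictions_contain_indicators)
    show "finite ?N" "finite ({i0} \<times> W)" using D(1) W finite_subset by auto
    show "?\<Phi> ` supported_on ?N \<subseteq> supported_on ?N"
      by (auto intro!: supported_on_diff sofic_op_supported)
    show "c \<noteq> 0" using entry(3) by (simp add: c_def)
    fix p assume "p \<in> {i0} \<times> W"
    then obtain w where p: "p = (i0, w)" "w \<in> W" by blast
    have "indicator {(j0, \<sigma> k0 w)} \<in> supported_on ?N"
      using entry(1) D(2) W p(2) by (intro indicator_singleton_in_supported_on) auto
    moreover have "\<forall>q\<in>{i0} \<times> W. ?\<Phi> (indicator {(j0, \<sigma> k0 w)}) q = (if q = p then c else 0)"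
      using op ind p by (auto simp: c_def)
    ultimately show "\<exists>u\<in>?\<Phi> ` supported_on ?N. \<forall>q\<in>{i0} \<times> W. u q = (if q = p then c else 0)"
      by blast
  qed
  then show ?thesis by (simp add: card_cartesian_product)
qed

lemma card_UN_le_mult:
  assumes "finite I" "\<And>i. i \<in> I \<Longrightarrow> card (A i) \<le> b"
  shows "card (\<Union>i\<in>I. A i) \<le> card I * b"
proof -
  have "card (\<Union>i\<in>I. A i) \<le> (\<Sum>i\<in>I. card (A i))" by (rule card_UN_le[OF assms(1)])
  also have "\<dots> \<le> card I * b" using sum_bounded_above[of I "\<lambda>i. card (A i)" b] assms(2) by simp
  finally show ?thesis .
qed

lemma real_card_UN_le_mult:
  assumes "finite I" "\<And>i. i \<in> I \<Longrightarrow> real (card (A i)) \<le> b"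
  shows "real (card (\<Union>i\<in>I. A i)) \<le> real (card I) * b"
proof -
  have "real (card (\<Union>i\<in>I. A i)) \<le> (\<Sum>i\<in>I. real (card (A i)))"
    using card_UN_le[OF assms(1), of A] by (metis of_nat_le_iff of_nat_sum)
  also have "\<dots> \<le> real (card I) * b"
    using sum_bounded_above[of I "\<lambda>i. real (card (A i))" b] assms(2) by simp
  finally show ?thesis .
qed

lemma bounded_degree_independent_set:
  fixes conflict :: "'a \<Rightarrow> 'a \<Rightarrow> bool"
  assumes "finite U" "\<And>v. v \<in> U \<Longrightarrow> card {w \<in> U. conflict v w \<or> conflict w v} \<le> \<delta>"
  shows "\<exists>W\<subseteq>U. (\<forall>v\<in>W. \<forall>w\<in>W. v \<noteq> w \<longrightarrow> \<not> conflict v w) \<and> card U \<le> (\<delta> + 1) * card W"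
  using assms
proof (induction "card U" arbitrary: U rule: less_induct)
  case less
  show ?case
  proof (cases "U = {}")
    case False
    then obtain v where v: "v \<in> U" by blast
    define N where "N = {w \<in> U. conflict v w \<or> conflict w v}"
    define U' where "U' = U - insert v N"
    have fin: "finite U'" using less.prems(1) by (simp add: U'_def)
    have "card U' < card U"
      unfolding U'_def using v less.prems(1) by (intro psubset_card_mono) auto
    moreover have "card {w \<in> U'. conflict u w \<or> conflict w u} \<le> \<delta>" if "u \<in> U'" for u
    proof -
      have "card {w \<in> U'. conflict u w \<or> conflict w u} \<le> card {w \<in> U. conflict u w \<or> conflict w u}"
        using less.prems(1) by (intro card_mono) (auto simp: U'_def)
      also have "\<dots> \<le> \<delta>" using less.prems(2) that by (simp add: U'_def)
      finally show ?thesis .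
    qed
    ultimately have "\<exists>W\<subseteq>U'. (\<forall>v\<in>W. \<forall>w\<in>W. v \<noteq> w \<longrightarrow> \<not> conflict v w) \<and> card U' \<le> (\<delta> + 1) * card W"
      by (rule less.hyps[OF _ fin])
    then obtain W where W: "W \<subseteq> U'" "\<forall>v\<in>W. \<forall>w\<in>W. v \<noteq> w \<longrightarrow> \<not> conflict v w"
      "card U' \<le> (\<delta> + 1) * card W"
      by blast
    have W_fin: "finite W" "v \<notin> W" using W(1) fin finite_subset by (auto simp: U'_def)
    have "card U \<le> card (insert v N \<union> U')"
      using less.prems(1) by (intro card_mono) (auto simp: U'_def N_def)
    also have "\<dots> \<le> card (insert v N) + card U'" by (rule card_Un_le)
    also have "card (insert v N) \<le> \<delta> + 1"
      using less.prems(1) less.prems(2)[OF v] by (simp add: N_def card_insert_if)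
    finally have "card U \<le> (\<delta> + 1) * card (insert v W)"
      using W(3) W_fin by simp
    moreover have "insert v W \<subseteq> U" using W(1) v by (auto simp: U'_def)
    moreover have "\<forall>x\<in>insert v W. \<forall>y\<in>insert v W. x \<noteq> y \<longrightarrow> \<not> conflict x y"
      using W(1,2) by (auto simp: U'_def N_def)
    ultimately show ?thesis by blast
  qed (intro exI[of _ "{}"], simp)
qed

lemma card_disagree_le_if_ham_dist_le:
  assumes "finite D" "D \<noteq> {}" "ham_dist D f g \<le> \<epsilon>"
  shows "real (card {v \<in> D. f v \<noteq> g v}) \<le> \<epsilon> * real (card D)"
  using assms by (simp add: ham_dist_def divide_le_eq card_gt_0_iff)

lemma card_agree_le_if_ham_dist_ge:
  assumes "finite D" "D \<noteq> {}" "ham_dist D f g \<ge> 1 - \<epsilon>"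
  shows "real (card {v \<in> D. f v = g v}) \<le> \<epsilon> * real (card D)"
proof -
  have "{v \<in> D. f v = g v} = D - {v \<in> D. f v \<noteq> g v}" by blast
  then have "real (card {v \<in> D. f v = g v}) = real (card D) - real (card {v \<in> D. f v \<noteq> g v})"
    using assms(1) by (simp add: card_Diff_subset card_mono)
  moreover have "(1 - \<epsilon>) * real (card D) \<le> real (card {v \<in> D. f v \<noteq> g v})"
    using assms by (simp add: ham_dist_def le_divide_eq card_gt_0_iff)
  ultimately show ?thesis by (simp add: algebra_simps)
qed

section \<open>Sofic approximations\<close>

locale sofic_approximation =
  fixes F :: "'m::monoid_mult set" and \<Delta> :: nat and \<epsilon> :: real
    and D :: "nat set" and \<sigma> :: "'m \<Rightarrow> nat \<Rightarrow> nat"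
  assumes finite_D: "finite D" and D_ne: "D \<noteq> {}"
    and maps_into: "\<forall>k. \<sigma> k ` D \<subseteq> D"
    and one: "\<forall>v\<in>D. \<sigma> 1 v = v"
    and almost_mult: "\<forall>k1\<in>F. \<forall>k2\<in>F. ham_dist D (\<sigma> (k1 * k2)) (\<sigma> k1 \<circ> \<sigma> k2) \<le> \<epsilon>"
    and almost_separating: "\<forall>k1\<in>F. \<forall>k2\<in>F. k1 \<noteq> k2 \<longrightarrow> ham_dist D (\<sigma> k1) (\<sigma> k2) \<ge> 1 - \<epsilon>"
    and card_preimage: "\<forall>k\<in>F. \<forall>v\<in>D. card {u \<in> D. \<sigma> k u = v} \<le> \<Delta>"

lemma strongly_sofic_iff:
  "strongly_sofic TYPE('m::monoid_mult) \<longleftrightarrow>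
    (\<forall>F :: 'm set. finite F \<longrightarrow> (\<exists>\<Delta>\<ge>1. \<forall>\<epsilon>>0. \<exists>D \<sigma>. sofic_approximation F \<Delta> \<epsilon> D \<sigma>))"
  unfolding strongly_sofic_def sofic_approximation_def by (simp only: conj_assoc)

context sofic_approximation
begin

lemma eps_nonneg: "F \<noteq> {} \<Longrightarrow> 0 \<le> \<epsilon>"
  using almost_mult by (force simp: ham_dist_def intro: order_trans[rotated])

lemma card_sofic_defect_le:
  assumes "finite F" "G \<subseteq> F"
  shows "real (card (sofic_defect D \<sigma> G)) \<le> real (card F) ^ 2 * \<epsilon> * real (card D)"
proof -
  have "sofic_defect D \<sigma> G \<subseteq> (\<Union>(a, b)\<in>F \<times> F. {v \<in> D. \<sigma> (a * b) v \<noteq> (\<sigma> a \<circ> \<sigma> b) v})"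
    using assms(2) by (auto simp: sofic_defect_def)
  then have "real (card (sofic_defect D \<sigma> G)) \<le> real (card (\<Union>(a, b)\<in>F \<times> F. {v \<in> D. \<sigma> (a * b) v \<noteq> (\<sigma> a \<circ> \<sigma> b) v}))"
    using assms(1) finite_D by (intro of_nat_mono card_mono) auto
  also have "\<dots> \<le> real (card (F \<times> F)) * (\<epsilon> * real (card D))"
  proof (rule real_card_UN_le_mult)
    fix p assume "p \<in> F \<times> F"
    then obtain a b where "p = (a, b)" "a \<in> F" "b \<in> F" by blast
    then show "real (card (case p of (a, b) \<Rightarrow> {v \<in> D. \<sigma> (a * b) v \<noteq> (\<sigma> a \<circ> \<sigma> b) v}))
        \<le> \<epsilon> * real (card D)"
      using card_disagree_le_if_ham_dist_le[OF finite_D D_ne almost_mult[rule_format]] by simp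
  qed (use assms(1) in simp)
  finally show ?thesis by (simp add: card_cartesian_product power2_eq_square mult_ac)
qed

definition collisions :: "'m \<Rightarrow> nat set" where
  "collisions k0 = {v \<in> D. \<exists>k\<in>F. k \<noteq> k0 \<and> \<sigma> k v = \<sigma> k0 v}"

lemma card_collisions_le:
  assumes "finite F" "k0 \<in> F"
  shows "real (card (collisions k0)) \<le> real (card F) * \<epsilon> * real (card D)"
proof -
  have "0 \<le> \<epsilon>" using eps_nonneg assms(2) by blast
  have "collisions k0 = (\<Union>k\<in>F - {k0}. {v \<in> D. \<sigma> k v = \<sigma> k0 v})"
    by (auto simp: collisions_def)
  moreover have "real (card (\<Union>k\<in>F - {k0}. {v \<in> D. \<sigma> k v = \<sigma> k0 v}))
      \<le> real (card (F - {k0})) * (\<epsilon> * real (card D))"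
    using assms almost_separating
    by (intro real_card_UN_le_mult card_agree_le_if_ham_dist_ge[OF finite_D D_ne]) auto
  ultimately have "real (card (collisions k0)) \<le> real (card (F - {k0})) * (\<epsilon> * real (card D))"
    by simp
  also have "\<dots> \<le> real (card F) * (\<epsilon> * real (card D))"
    using assms \<open>0 \<le> \<epsilon>\<close> by (intro mult_right_mono) (auto intro: card_mono)
  finally show ?thesis by (simp add: mult_ac)
qed

lemma exists_separated_subset:
  assumes "finite F" "k0 \<in> F"
  obtains W where "W \<subseteq> D"
    "\<And>v w k. v \<in> W \<Longrightarrow> w \<in> W \<Longrightarrow> k \<in> F \<Longrightarrow> \<sigma> k v = \<sigma> k0 w \<Longrightarrow> k = k0 \<and> v = w"
    "real (card D) \<le> real (card F) * \<epsilon> * real (card D) + real ((2 * card F * \<Delta> + 1) * card W)"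
proof -
  define conflict where "conflict v w \<longleftrightarrow> (\<exists>k\<in>F. \<sigma> k v = \<sigma> k0 w)" for v w
  let ?U = "D - collisions k0"
  have deg: "card {w \<in> ?U. conflict v w \<or> conflict w v} \<le> 2 * card F * \<Delta>" if "v \<in> ?U" for v
  proof -
    have "{w \<in> ?U. conflict v w \<or> conflict w v}
        \<subseteq> (\<Union>k\<in>F. {w \<in> D. \<sigma> k0 w = \<sigma> k v}) \<union> (\<Union>k\<in>F. {w \<in> D. \<sigma> k w = \<sigma> k0 v})"
      by (auto simp: conflict_def)
    then have "card {w \<in> ?U. conflict v w \<or> conflict w v}
        \<le> card (\<Union>k\<in>F. {w \<in> D. \<sigma> k0 w = \<sigma> k v}) + card (\<Union>k\<in>F. {w \<in> D. \<sigma> k w = \<sigma> k0 v})"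
      using assms(1) finite_D by (intro order_trans[OF card_mono card_Un_le]) auto
    also have "\<dots> \<le> card F * \<Delta> + card F * \<Delta>"
      using that maps_into assms card_preimage
      by (intro add_mono card_UN_le_mult) auto
    finally show ?thesis by simp
  qed
  have "\<exists>W\<subseteq>?U. (\<forall>v\<in>W. \<forall>w\<in>W. v \<noteq> w \<longrightarrow> \<not> conflict v w)
      \<and> card ?U \<le> (2 * card F * \<Delta> + 1) * card W"
    using finite_D by (intro bounded_degree_independent_set deg) auto
  then obtain W where W: "W \<subseteq> ?U" "\<forall>v\<in>W. \<forall>w\<in>W. v \<noteq> w \<longrightarrow> \<not> conflict v w"
    "card ?U \<le> (2 * card F * \<Delta> + 1) * card W"
    by blast
  show ?thesis
  proof (rule that)
    show "W \<subseteq> D" using W(1) by blast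
    fix v w k assume vw: "v \<in> W" "w \<in> W" and k: "k \<in> F" "\<sigma> k v = \<sigma> k0 w"
    then have "v = w" using W(2) by (auto simp: conflict_def)
    moreover have "v \<in> D" "v \<notin> collisions k0" using W(1) vw(1) by auto
    ultimately show "k = k0 \<and> v = w" using k by (auto simp: collisions_def)
  next
    have "card D = card ?U + card (collisions k0)"
      using finite_D card_Diff_subset[of "collisions k0" D] card_mono[of D "collisions k0"]
      by (auto simp: collisions_def)
    then show "real (card D) \<le> real (card F) * \<epsilon> * real (card D) + real ((2 * card F * \<Delta> + 1) * card W)"
      using card_collisions_le[OF assms] W(3) by linarith
  qed
qed

lemma card_le_if_not_inverse:
  fixes X Y :: "nat \<Rightarrow> nat \<Rightarrow> 'm \<Rightarrow> 'k::field"
  assumes F: "F = (\<lambda>(a, b). a * b) ` (G \<times> G)"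
    and G: "finite G" "1 \<in> G" "mat_supported_in d G X" "mat_supported_in d G Y"
    and XY: "ma_mat_eq d (ma_mat_mult d X Y) ma_mat_one"
    and entry: "j0 < d" "i0 < d" "ma_mat_mult d Y X j0 i0 k0 \<noteq> ma_mat_one j0 i0 k0"
  shows "real (card D)
    \<le> (real (card F) + 3 * real d * real (card F) ^ 2 * real (2 * card F * \<Delta> + 1)) * \<epsilon> * real (card D)"
proof -
  have fin_F: "finite F" using G(1) F by simp
  have "a \<in> F" if "a \<in> G" for a
    using that G(2) F by (force intro: image_eqI[of _ _ "(a, 1)"])
  then have GF: "G \<subseteq> F" "1 \<in> F" using G(2) by auto
  have YX: "mat_supported_in d F (ma_mat_mult d Y X)"
    using mat_supported_in_ma_mat_mult[OF G(4,3)] F by simp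
  have "k0 \<in> F"
  proof (rule ccontr)
    assume "k0 \<notin> F"
    then have "ma_mat_mult d Y X j0 i0 k0 = 0" "ma_mat_one j0 i0 k0 = (0 :: 'k)"
      using mat_supported_inD[OF YX entry(1,2)] GF(2) by (auto simp: ma_mat_one_def ma_one_def)
    then show False using entry(3) by simp
  qed
  then obtain W where W: "W \<subseteq> D"
    "\<And>v w k. v \<in> W \<Longrightarrow> w \<in> W \<Longrightarrow> k \<in> F \<Longrightarrow> \<sigma> k v = \<sigma> k0 w \<Longrightarrow> k = k0 \<and> v = w"
    "real (card D) \<le> real (card F) * \<epsilon> * real (card D) + real ((2 * card F * \<Delta> + 1) * card W)"
    using exists_separated_subset[OF fin_F] by blast
  have "card W \<le> fun_space.dim ((\<lambda>x. sofic_op d D \<sigma> (ma_mat_mult d Y X) x - x) ` supported_on ({..<d} \<times> D))"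
    by (rule card_le_dim_sofic_op_minus_id[OF finite_D maps_into one fin_F GF(2) \<open>k0 \<in> F\<close> YX entry W(1,2)])
  also have "\<dots> \<le> 3 * (d * card (sofic_defect D \<sigma> G))"
    by (rule dim_sofic_op_minus_id_le[OF finite_D maps_into one G(1,3,4) XY])
  finally have "real (card W) \<le> real (3 * (d * card (sofic_defect D \<sigma> G)))"
    by (rule of_nat_mono)
  also have "\<dots> = 3 * real d * real (card (sofic_defect D \<sigma> G))" by simp
  also have "\<dots> \<le> 3 * real d * (real (card F) ^ 2 * \<epsilon> * real (card D))"
    using card_sofic_defect_le[OF fin_F GF(1)] by (intro mult_left_mono) auto
  finally have "real ((2 * card F * \<Delta> + 1) * card W)
      \<le> real (2 * card F * \<Delta> + 1) * (3 * real d * (real (card F) ^ 2 * \<epsilon> * real (card D)))"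
    unfolding of_nat_mult by (intro mult_left_mono) auto
  with W(3) show ?thesis by (simp add: algebra_simps)
qed

end

theorem corollary1p3:
  assumes "strongly_sofic TYPE('m::monoid_mult)"
  shows "monoid_algebra_stably_finite TYPE('m) TYPE('k::field)"
  unfolding monoid_algebra_stably_finite_def
proof (intro allI impI)
  fix d and X Y :: "nat \<Rightarrow> nat \<Rightarrow> 'm \<Rightarrow> 'k"
  assume "1 \<le> d" "ma_matrix d X" "ma_matrix d Y" and XY: "ma_mat_eq d (ma_mat_mult d X Y) ma_mat_one"
  then obtain G where G: "finite G" "1 \<in> G" "mat_supported_in d G X" "mat_supported_in d G Y"
    by (blast elim: obtain_common_support)
  define F where "F = (\<lambda>(a, b). a * b) ` (G \<times> G)"
  have "finite F" using G(1) by (simp add: F_def)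
  then obtain \<Delta> where approx: "\<forall>\<epsilon>>0. \<exists>D \<sigma>. sofic_approximation F \<Delta> \<epsilon> D \<sigma>"
    using assms by (auto simp: strongly_sofic_iff)
  define C where "C = real (card F) + 3 * real d * real (card F) ^ 2 * real (2 * card F * \<Delta> + 1)"
  have "C \<ge> 0" by (simp add: C_def)
  then obtain D \<sigma> where "sofic_approximation F \<Delta> (1 / (C + 1)) D \<sigma>"
    using approx by force
  then interpret sofic_approximation F \<Delta> "1 / (C + 1)" D \<sigma> .
  show "ma_mat_eq d (ma_mat_mult d Y X) ma_mat_one"
  proof (rule ccontr)
    assume "\<not> ma_mat_eq d (ma_mat_mult d Y X) ma_mat_one"
    then obtain j0 i0 k0 where "j0 < d" "i0 < d" "ma_mat_mult d Y X j0 i0 k0 \<noteq> ma_mat_one j0 i0 k0"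
      unfolding ma_mat_eq_def fun_eq_iff by blast
    then have "real (card D) \<le> C * (1 / (C + 1)) * real (card D)"
      using card_le_if_not_inverse[OF F_def G XY] by (simp add: C_def)
    moreover have "C * (1 / (C + 1)) * real (card D) < 1 * real (card D)"
      using \<open>C \<ge> 0\<close> finite_D D_ne by (intro mult_strict_right_mono) (auto simp: card_gt_0_iff)
    ultimately show False by simp
  qed
qed

end
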